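(* Let $A$ be a nilpotent non-abelian finite-dimensional Leibniz algebra over a field whose center $Z_1(A)=\{z\in A: zA=Az=0\}$ is one-dimensional. Then there is no nilpotent Leibniz algebra $N$ and integer $i\ge 2$ with $A=N^i$.
   Context: A (left) Leibniz algebra is an algebra satisfying $x(yz)=(xy)z+y(xz)$ for all $x,y,z$. The lower central series of $N$ is $N^1=N$, $N^{j+1}=NN^j$; $N$ is nilpotent if $N^t=0$ for some $t$. $A$ is abelian if $AA=0$. *)

theory Defs
  imports Complex_Main
begin

definition leibniz_algebra ::
  "('k::field \<Rightarrow> 'v::ab_group_add \<Rightarrow> 'v) \<Rightarrow> ('v \<Rightarrow> 'v \<Rightarrow> 'v) \<Rightarrow> bool" where
  "leibniz_algebra sc mu \<longleftrightarrow>
     Vector_Spaces.vector_space sc \<and>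
     (\<forall>x y z. mu (x + y) z = mu x z + mu y z) \<and>
     (\<forall>x y z. mu x (y + z) = mu x y + mu x z) \<and>
     (\<forall>c x y. mu (sc c x) y = sc c (mu x y)) \<and>
     (\<forall>c x y. mu x (sc c y) = sc c (mu x y)) \<and>
     (\<forall>x y z. mu x (mu y z) = mu (mu x y) z + mu y (mu x z))"

definition subspace_prod ::
  "('k::field \<Rightarrow> 'v::ab_group_add \<Rightarrow> 'v) \<Rightarrow> ('v \<Rightarrow> 'v \<Rightarrow> 'v) \<Rightarrow> 'v set \<Rightarrow> 'v set \<Rightarrow> 'v set" where
  "subspace_prod sc mu U V = module.span sc {mu u v | u v. u \<in> U \<and> v \<in> V}"

text \<open>lcs_aux n = N^(n+1).\<close>
primrec lcs_aux ::
  "('k::field \<Rightarrow> 'v::ab_group_add \<Rightarrow> 'v) \<Rightarrow> ('v \<Rightarrow> 'v \<Rightarrow> 'v) \<Rightarrow> nat \<Rightarrow> 'v set" where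
  "lcs_aux sc mu 0 = UNIV"
| "lcs_aux sc mu (Suc n) = subspace_prod sc mu UNIV (lcs_aux sc mu n)"

definition lcs ::
  "('k::field \<Rightarrow> 'v::ab_group_add \<Rightarrow> 'v) \<Rightarrow> ('v \<Rightarrow> 'v \<Rightarrow> 'v) \<Rightarrow> nat \<Rightarrow> 'v set" where
  "lcs sc mu j = lcs_aux sc mu (j - 1)"

definition nilpotent_alg ::
  "('k::field \<Rightarrow> 'v::ab_group_add \<Rightarrow> 'v) \<Rightarrow> ('v \<Rightarrow> 'v \<Rightarrow> 'v) \<Rightarrow> bool" where
  "nilpotent_alg sc mu \<longleftrightarrow> (\<exists>t\<ge>1. lcs sc mu t = {0})"

definition abelian_alg :: "('v::ab_group_add \<Rightarrow> 'v \<Rightarrow> 'v) \<Rightarrow> bool" where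
  "abelian_alg mu \<longleftrightarrow> (\<forall>x y. mu x y = 0)"

definition alg_center :: "('v::ab_group_add \<Rightarrow> 'v \<Rightarrow> 'v) \<Rightarrow> 'v set" where
  "alg_center mu = {z. \<forall>a. mu z a = 0 \<and> mu a z = 0}"

definition fin_dim ::
  "('k::field \<Rightarrow> 'v::ab_group_add \<Rightarrow> 'v) \<Rightarrow> bool" where
  "fin_dim sc \<longleftrightarrow> (\<exists>B. finite B \<and> module.span sc B = UNIV)"

end

theory Submission
  imports Defs
begin

(*
  Suppose A were isomorphic (as an algebra) to the term N^i, i >= 2, of the lower central
  series of a nilpotent Leibniz algebra N.  Write L_p = N^(p+1) (so A = L_p with p = i - 1 >= 1).
  The product of the lower central series is graded:  L_a L_b \<subseteq> L_(a+b+1).  Let K be the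
  last index with L_K \<noteq> 0; then K >= p since A \<noteq> 0.  For every j >= p with L_(j+p+1) = 0,
  the elements of L_j annihilate A = L_p from both sides, so L_j corresponds to a subspace
  of the centre of A, which is one-dimensional.
    * If K = p, this applies to j = p itself: all of A is central, i.e. A is abelian.
    * If K = j + 1 > p, then 0 \<noteq> L_K \<subseteq> L_j both lie in the one-dimensional centre, so
      L_K = L_j, hence L_(K+1) = N L_K = N L_j = L_K \<noteq> 0, contradicting the choice of K.
*)

locale leibniz =
  fixes sc :: "'k::field \<Rightarrow> 'v::ab_group_add \<Rightarrow> 'v" and mu :: "'v \<Rightarrow> 'v \<Rightarrow> 'v"
  assumes leibniz_alg: "leibniz_algebra sc mu"
begin

sublocale vector_space sc
  using leibniz_alg unfolding leibniz_algebra_def by blast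

lemma mult_add_left: "mu (x + y) z = mu x z + mu y z"
  using leibniz_alg unfolding leibniz_algebra_def by blast

lemma mult_scale_left: "mu (sc c x) y = sc c (mu x y)"
  using leibniz_alg unfolding leibniz_algebra_def by blast

lemma leibniz_identity: "mu x (mu y z) = mu (mu x y) z + mu y (mu x z)"
  using leibniz_alg unfolding leibniz_algebra_def by blast

lemma mult_zero_left: "mu 0 y = 0"
  using mult_add_left[of 0 0 y] by simp

text \<open>L n denotes the term N^(n+1) of the lower central series.\<close>
abbreviation L :: "nat \<Rightarrow> 'v set" where
  "L n \<equiv> lcs_aux sc mu n"

lemma lcs_subspace: "subspace (L n)"
  by (cases n) (auto simp: subspace_prod_def)

lemma lcs_zero: "0 \<in> L n"
  by (rule subspace_0[OF lcs_subspace])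

lemma lcs_Suc_subset: "L (Suc n) \<subseteq> L n"
proof (induction n)
  case (Suc n)
  then have "{mu u v | u v. u \<in> UNIV \<and> v \<in> L (Suc n)} \<subseteq> {mu u v | u v. u \<in> UNIV \<and> v \<in> L n}"
    by blast
  then show ?case by (simp add: subspace_prod_def span_mono)
qed simp

lemma lcs_antimono: "m \<le> n \<Longrightarrow> L n \<subseteq> L m"
  using lift_Suc_antimono_le[of L, OF lcs_Suc_subset] by blast

lemma lcs_vanish_beyond: "L m = {0} \<Longrightarrow> m \<le> n \<Longrightarrow> L n = {0}"
  using lcs_antimono lcs_zero by blast

lemma lcs_mult_left: "y \<in> L b \<Longrightarrow> mu x y \<in> L (Suc b)"
  by (auto simp: subspace_prod_def intro!: span_base)

text \<open>Induction on a; for a generator x = p q with q \<in> L (a-1) the Leibniz identity rewrites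
  x y = p (q y) - q (p y), and both terms are handled by the induction hypothesis.\<close>
lemma lcs_mult: "x \<in> L a \<Longrightarrow> y \<in> L b \<Longrightarrow> mu x y \<in> L (a + b + 1)"
proof (induction a arbitrary: x y b)
  case 0
  then show ?case using lcs_mult_left by simp
next
  case (Suc a)
  have "x \<in> span {mu p q | p q. p \<in> UNIV \<and> q \<in> L a}"
    using Suc.prems(1) by (simp add: subspace_prod_def)
  then have "\<forall>b y. y \<in> L b \<longrightarrow> mu x y \<in> L (Suc a + b + 1)"
  proof (induction rule: span_induct_alt)
    case base
    show ?case by (intro allI impI) (simp only: mult_zero_left lcs_zero)
  next
    case (step c g w)
    show ?case
    proof (intro allI impI)
      fix b y assume y: "y \<in> L b"
      from step.hyps obtain p q where g: "g = mu p q" and q: "q \<in> L a" by blast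
      have "mu g y = mu p (mu q y) - mu q (mu p y)"
        using leibniz_identity[of p q y] g by (simp add: algebra_simps)
      moreover have "mu p (mu q y) \<in> L (Suc a + b + 1)"
        using lcs_mult_left[OF Suc.IH[OF q y]] by simp
      moreover have "mu q (mu p y) \<in> L (Suc a + b + 1)"
        using Suc.IH[OF q lcs_mult_left[OF y]] by simp
      ultimately have "mu g y \<in> L (Suc a + b + 1)"
        by (metis subspace_diff[OF lcs_subspace])
      moreover have "mu w y \<in> L (Suc a + b + 1)"
        using step.IH y by blast
      ultimately show "mu (sc c g + w) y \<in> L (Suc a + b + 1)"
        unfolding mult_add_left mult_scale_left
        by (intro subspace_add[OF lcs_subspace] subspace_scale[OF lcs_subspace])
    qed
  qed
  then show ?case using Suc.prems(2) by blast
qed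

lemma lcs_last_nonzero:
  assumes "nilpotent_alg sc mu" and "L p \<noteq> {0}"
  obtains K where "p \<le> K" "L K \<noteq> {0}" "L (Suc K) = {0}"
proof -
  obtain t where "L t = {0}"
    using assms(1) unfolding nilpotent_alg_def lcs_def by blast
  then have ex: "\<exists>m. L m = {0}" by blast
  define m where "m = (LEAST m. L m = {0})"
  have m_zero: "L m = {0}" unfolding m_def using LeastI_ex[OF ex] .
  have "p < m"
  proof (rule ccontr)
    assume "\<not> p < m"
    then have "L p \<subseteq> {0}" using lcs_antimono m_zero by (metis not_less)
    then show False using assms(2) lcs_zero by blast
  qed
  then obtain K where K: "m = Suc K" "p \<le> K" by (cases m) auto
  have "L K \<noteq> {0}"
    using not_less_Least[of K "\<lambda>m. L m = {0}"] K(1) unfolding m_def by simp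
  then show ?thesis using that K m_zero by blast
qed

end

lemma (in vector_space) dim_one_proportional:
  assumes "dim S = 1" and "a \<in> S" "b \<in> S" "a \<noteq> 0"
  obtains r where "b = scale r a"
proof -
  obtain B where B: "B \<subseteq> S" "S \<subseteq> span B" "card B = 1"
    using basis_exists[of S] assms(1) by metis
  then obtain c where "B = {c}" by (meson card_1_singletonE)
  then obtain s r where a: "a = scale s c" and b: "b = scale r c"
    using B(2) assms(2,3) span_singleton by blast
  have "s \<noteq> 0" using a assms(4) by auto
  then have "b = scale (r / s) a" using a b by (simp add: scale_scale)
  then show ?thesis using that by blast
qed

locale lcs_embedding =
  A: leibniz scA muA + N: leibniz scN muN
  for scA :: "'k::field \<Rightarrow> 'a::ab_group_add \<Rightarrow> 'a" and muA
    and scN :: "'k \<Rightarrow> 'n::ab_group_add \<Rightarrow> 'n" and muN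
    and f :: "'a \<Rightarrow> 'n" and p :: nat +
  assumes linear: "Vector_Spaces.linear scA scN f"
    and injective: "inj f"
    and image: "range f = N.L p"
    and hom: "\<And>x y. f (muA x y) = muN (f x) (f y)"
begin

lemma f_scale: "f (scA c x) = scN c (f x)"
  using linear by (simp add: linear_iff_module_hom module_hom.scale)

lemma f_eq_0_iff: "f x = 0 \<longleftrightarrow> x = 0"
  using linear injective
  by (metis injD linear_iff_module_hom module_hom.zero)

text \<open>A non-abelian A contains a nonzero product, so L p \<noteq> 0.\<close>
lemma image_nonzero:
  assumes "\<not> abelian_alg muA"
  shows "N.L p \<noteq> {0}"
proof -
  obtain x y where "muA x y \<noteq> 0" using assms by (auto simp: abelian_alg_def)
  then have "f (muA x y) \<noteq> 0" "f (muA x y) \<in> N.L p"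
    using f_eq_0_iff image by auto
  then show ?thesis by blast
qed

text \<open>If L (j+p+1) = 0, the elements of L j annihilate L p, so their preimages are central.\<close>
lemma preimage_central:
  assumes "N.L (j + p + 1) = {0}" and "f a \<in> N.L j"
  shows "a \<in> alg_center muA"
proof -
  have "muA a c = 0 \<and> muA c a = 0" for c
  proof -
    have fc: "f c \<in> N.L p" using image by blast
    have "muN (f a) (f c) = 0" "muN (f c) (f a) = 0"
      using N.lcs_mult[OF assms(2) fc] N.lcs_mult[OF fc assms(2)] assms(1)
      by (simp_all add: add.commute)
    then show ?thesis using hom f_eq_0_iff by metis
  qed
  then show ?thesis by (simp add: alg_center_def)
qed

lemma abelian_if_last:
  assumes "N.L (Suc p) = {0}"
  shows "abelian_alg muA"
proof -
  have "N.L (p + p + 1) = {0}"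
    by (rule N.lcs_vanish_beyond[OF assms]) simp
  then have "a \<in> alg_center muA" for a
    using preimage_central image by blast
  then show ?thesis by (simp add: abelian_alg_def alg_center_def)
qed

text \<open>With a one-dimensional centre, the series cannot strictly decrease from L j to a nonzero
  L (j+1) once j \<ge> p and L (j+p+1) = 0: both terms lie in the image of the centre.\<close>
lemma lcs_stationary:
  assumes centre: "A.dim (alg_center muA) = 1"
    and j: "p \<le> j" and vanish: "N.L (j + p + 1) = {0}" and nonzero: "N.L (Suc j) \<noteq> {0}"
  shows "N.L (Suc j) = N.L j"
proof
  show "N.L (Suc j) \<subseteq> N.L j" by (rule N.lcs_Suc_subset)
  have in_image: "N.L j \<subseteq> range f"
    using image N.lcs_antimono[OF j] by blast
  obtain u where u: "u \<in> N.L (Suc j)" "u \<noteq> 0"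
    using nonzero N.lcs_zero by blast
  then obtain a where a: "f a \<in> N.L (Suc j)" "a \<noteq> 0"
    using in_image N.lcs_Suc_subset f_eq_0_iff by blast
  show "N.L j \<subseteq> N.L (Suc j)"
  proof
    fix v assume v: "v \<in> N.L j"
    then obtain b where b: "v = f b" using in_image by blast
    have "a \<in> alg_center muA" "b \<in> alg_center muA"
      using preimage_central[OF vanish] a(1) v b N.lcs_Suc_subset by blast+
    then obtain r where "b = scA r a"
      using A.dim_one_proportional[OF centre] a(2) by metis
    then have "v = scN r (f a)" using b f_scale by simp
    then show "v \<in> N.L (Suc j)"
      using N.subspace_scale[OF N.lcs_subspace a(1)] by simp
  qed
qed

end

theorem mainTheorem15:
  fixes scaleA :: "'k::field \<Rightarrow> 'a::ab_group_add \<Rightarrow> 'a"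
    and multA :: "'a \<Rightarrow> 'a \<Rightarrow> 'a"
    and scaleN :: "'k \<Rightarrow> 'n::ab_group_add \<Rightarrow> 'n"
    and multN :: "'n \<Rightarrow> 'n \<Rightarrow> 'n"
    and i :: nat
  assumes "leibniz_algebra scaleA multA"
    and "fin_dim scaleA"
    and "nilpotent_alg scaleA multA"
    and "\<not> abelian_alg multA"
    and "vector_space.dim scaleA (alg_center multA) = 1"
    and "leibniz_algebra scaleN multN"
    and "nilpotent_alg scaleN multN"
    and "i \<ge> 2"
  shows "\<not> (\<exists>f. Vector_Spaces.linear scaleA scaleN f
              \<and> bij_betw f UNIV (lcs scaleN multN i)
              \<and> (\<forall>x y. f (multA x y) = multN (f x) (f y)))"
proof
  assume "\<exists>f. Vector_Spaces.linear scaleA scaleN f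
              \<and> bij_betw f UNIV (lcs scaleN multN i)
              \<and> (\<forall>x y. f (multA x y) = multN (f x) (f y))"
  then obtain f where "Vector_Spaces.linear scaleA scaleN f"
    and "bij_betw f UNIV (lcs scaleN multN i)" and "\<forall>x y. f (multA x y) = multN (f x) (f y)"
    by blast
  with assms interpret E: lcs_embedding scaleA multA scaleN multN f "i - 1"
    by (intro lcs_embedding.intro lcs_embedding_axioms.intro leibniz.intro)
      (auto simp: bij_betw_def lcs_def)
  obtain K where K: "i - 1 \<le> K" "E.N.L K \<noteq> {0}" "E.N.L (Suc K) = {0}"
    using E.N.lcs_last_nonzero assms(7) E.image_nonzero assms(4) by metis
  show False
  proof (cases "K = i - 1")
    case True
    then show False using E.abelian_if_last K(3) assms(4) by simp
  next
    case False
    then obtain j where j: "K = Suc j" "i - 1 \<le> j" using K(1) by (cases K) auto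
    have "E.N.L (j + (i - 1) + 1) = {0}"
      using assms(8) j(1) by (intro E.N.lcs_vanish_beyond[OF K(3)]) simp
    then have "E.N.L K = E.N.L j"
      using E.lcs_stationary assms(5) j K(2) by simp
    then have "E.N.L (Suc K) = E.N.L K" using j(1) by simp
    then show False using K(2,3) by simp
  qed
qed

end
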